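(* Let $\mathcal{A}$ be a complex Banach algebra with unity, $a,b\in\mathcal{A}$ and $k$ a positive integer. Suppose $ab\alpha_{1}\alpha_{2}\cdots\alpha_{k}=0$ for all $\alpha_{1},\dots,\alpha_{k}\in\{a,b\}$. Then $a,b\in\mathcal{A}^{qnil}$ if and only if $a+b\in\mathcal{A}^{qnil}$.
   Context: $\mathcal{A}^{qnil}$ denotes the set of quasinilpotent elements of $\mathcal{A}$, i.e. elements whose spectrum is $\{0\}$. *)

theory Defs
  imports "HOL-Analysis.Analysis"
begin

text \<open>HOL has no class of complex normed algebras, so we introduce one:
  a complex vector space structure compatible with the real one.\<close>

class scaleC =
  fixes scaleC :: "complex \<Rightarrow> 'a \<Rightarrow> 'a" (infixr \<open>*\<^sub>C\<close> 75)

class complex_banach_algebra_1 = scaleC + real_normed_algebra_1 + banach +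
  assumes scaleC_add_right: "c *\<^sub>C (x + y) = c *\<^sub>C x + c *\<^sub>C y"
    and scaleC_add_left: "(c + d) *\<^sub>C x = c *\<^sub>C x + d *\<^sub>C x"
    and scaleC_scaleC: "c *\<^sub>C (d *\<^sub>C x) = (c * d) *\<^sub>C x"
    and scaleC_one: "(1::complex) *\<^sub>C x = x"
    and scaleR_scaleC: "scaleR r x = complex_of_real r *\<^sub>C x"
    and mult_scaleC_left: "(c *\<^sub>C x) * y = c *\<^sub>C (x * y)"
    and mult_scaleC_right: "x * (c *\<^sub>C y) = c *\<^sub>C (x * y)"
    and norm_scaleC: "norm (c *\<^sub>C x) = cmod c * norm x"

definition invertible_elem :: "'a::ring_1 \<Rightarrow> bool" where
  "invertible_elem x \<longleftrightarrow> (\<exists>y. x * y = 1 \<and> y * x = 1)"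

definition spectrum :: "'a::complex_banach_algebra_1 \<Rightarrow> complex set" where
  "spectrum a = {z. \<not> invertible_elem (z *\<^sub>C 1 - a)}"

definition quasinilpotent :: "'a::complex_banach_algebra_1 \<Rightarrow> bool" where
  "quasinilpotent a \<longleftrightarrow> spectrum a = {0}"

end

theory Submission
  imports Defs
begin

(* A complex Banach algebra element x is quasinilpotent iff 1 - \<mu> x is invertible for every
   complex \<mu>, because the spectrum is never empty. We prove the latter by Rickart's elementary
   argument: averaging (1 - \<mu> x)\<inverse> over \<mu> times the n-th roots of unity gives (1 - \<mu>^n x^n)\<inverse>,
   and uniform continuity of the resolvent then forces norm (x ^ n) \<longlonglongrightarrow> 0, which is
   impossible for x and x\<inverse> simultaneously.

   Replacing a, b by \<mu> a, \<mu> b preserves the hypothesis, so it suffices to compare 1 - a, 1 - b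
   and 1 - (a + b) in a ring in which a b w = 0 for every word w in a and b of length at least k.
   There (1 - a) (1 - b) = 1 - (a + b) + a b, and the term a b can be absorbed by a nilpotent
   factor: 1 - (a + b) = (1 - a) (1 - n) (1 - b) with n = (1 - a)\<inverse> a b (1 - b)\<inverse>, and
   (1 - a) (1 - b) = (1 - (a + b)) (1 + m) with m = (1 - (a + b))\<inverse> a b. Both n and m are
   nilpotent because multiplying by these inverses never shortens the words that a b must be
   followed by before it vanishes. In the second case 1 - \<mu> a and 1 - \<mu> b only get one-sided
   inverses; as an element with a one-sided inverse is invertible once it is close enough to an
   invertible element, the set of \<mu> for which they are invertible is open and closed in the
   complex plane, and it contains 0. *)

global_interpretation scaleC: vector_space "scaleC :: complex \<Rightarrow> 'a \<Rightarrow> 'a::complex_banach_algebra_1"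
  by unfold_locales (simp_all add: scaleC_add_right scaleC_add_left scaleC_scaleC scaleC_one)

lemma scaleC_power: "(c *\<^sub>C x) ^ n = c ^ n *\<^sub>C (x::'a::complex_banach_algebra_1) ^ n"
  by (induction n) (simp_all add: mult_scaleC_left mult_scaleC_right)

lemma scaleC_of_nat: "of_nat n *\<^sub>C x = of_nat n * (x::'a::complex_banach_algebra_1)"
  by (induction n) (simp_all add: scaleC.scale_left_distrib distrib_right)

lemma bounded_linear_scaleC_left [bounded_linear]:
  "bounded_linear (\<lambda>c. c *\<^sub>C (x::'a::complex_banach_algebra_1))"
proof (rule bounded_linear_intro)
  show "(b + c) *\<^sub>C x = b *\<^sub>C x + c *\<^sub>C x" for b c
    by (rule scaleC_add_left)
  show "(r *\<^sub>R c) *\<^sub>C x = r *\<^sub>R (c *\<^sub>C x)" for r c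
    by (simp add: scaleR_scaleC scaleR_conv_of_real)
  show "norm (c *\<^sub>C x) \<le> norm c * norm x" for c
    by (simp add: norm_scaleC)
qed

section \<open>Invertible elements of a ring\<close>

definition inverse_elem :: "'a::ring_1 \<Rightarrow> 'a" where
  "inverse_elem x = (SOME y. x * y = 1 \<and> y * x = 1)"

lemma invertible_elemI: "x * y = 1 \<Longrightarrow> y * x = 1 \<Longrightarrow> invertible_elem x"
  unfolding invertible_elem_def by blast

lemma
  assumes "invertible_elem x"
  shows right_inverse_elem: "x * inverse_elem x = 1"
    and left_inverse_elem: "inverse_elem x * x = 1"
  using someI_ex[OF assms[unfolded invertible_elem_def]] unfolding inverse_elem_def by auto

lemma inverse_elem_unique: "(x::'a::ring_1) * y = 1 \<Longrightarrow> y * x = 1 \<Longrightarrow> inverse_elem x = y"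
  by (metis invertible_elemI left_inverse_elem mult.assoc mult_1_left mult_1_right)

lemma invertible_elem_one [simp]: "invertible_elem (1::'a::ring_1)"
  by (rule invertible_elemI[of _ 1]) simp_all

lemma invertible_elem_inverse_elem: "invertible_elem x \<Longrightarrow> invertible_elem (inverse_elem x)"
  by (metis invertible_elemI left_inverse_elem right_inverse_elem)

lemma inverse_elem_inverse_elem: "invertible_elem x \<Longrightarrow> inverse_elem (inverse_elem x) = x"
  by (simp add: inverse_elem_unique left_inverse_elem right_inverse_elem)

lemma
  assumes "invertible_elem (x::'a::ring_1)" "invertible_elem y"
  shows invertible_elem_mult: "invertible_elem (x * y)"
    and inverse_elem_mult: "inverse_elem (x * y) = inverse_elem y * inverse_elem x"
proof -
  have "x * y * (inverse_elem y * inverse_elem x) = 1"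
    by (simp add: assms right_inverse_elem mult.assoc flip: mult.assoc[of y])
  moreover have "inverse_elem y * inverse_elem x * (x * y) = 1"
    by (simp add: assms left_inverse_elem mult.assoc flip: mult.assoc[of "inverse_elem x"])
  ultimately show "invertible_elem (x * y)" "inverse_elem (x * y) = inverse_elem y * inverse_elem x"
    by (auto intro: invertible_elemI inverse_elem_unique)
qed

lemma invertible_elem_minus_iff [simp]: "invertible_elem (- (x::'a::ring_1)) \<longleftrightarrow> invertible_elem x"
  unfolding invertible_elem_def by (metis minus_minus mult_minus_left mult_minus_right)

lemma invertible_elem_mult_cancel_left:
  assumes "invertible_elem (x::'a::ring_1)" "invertible_elem (x * y)"
  shows "invertible_elem y"
proof -
  have "y = inverse_elem x * (x * y)"
    by (simp add: assms(1) left_inverse_elem flip: mult.assoc)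
  then show ?thesis
    using assms by (metis invertible_elem_inverse_elem invertible_elem_mult)
qed

lemma invertible_elem_mult_cancel_right:
  assumes "invertible_elem (y::'a::ring_1)" "invertible_elem (x * y)"
  shows "invertible_elem x"
proof -
  have "x = (x * y) * inverse_elem y"
    by (simp add: assms(1) right_inverse_elem mult.assoc)
  then show ?thesis
    using assms by (metis invertible_elem_inverse_elem invertible_elem_mult)
qed

lemma invertible_elem_mult_imp_one_sided:
  assumes "invertible_elem ((x::'a::ring_1) * y)"
  shows "\<exists>z. x * z = 1" and "\<exists>z. z * y = 1"
  using right_inverse_elem[OF assms] left_inverse_elem[OF assms] by (metis mult.assoc)+

lemma power_mult_power_eq_one: "(x::'a::monoid_mult) * y = 1 \<Longrightarrow> x ^ n * y ^ n = 1"
proof (induction n)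
  case (Suc n)
  have "x ^ Suc n * y ^ Suc n = x ^ n * (x * y) * y ^ n"
    by (simp only: power_Suc2[of x] power_Suc[of y] mult.assoc)
  then show ?case
    using Suc by simp
qed simp

lemma one_minus_mult_geometric_sum: "(1 - (x::'a::ring_1)) * (\<Sum>i<n. x ^ i) = 1 - x ^ n"
proof (induction n)
  case (Suc n)
  have "(1 - x) * (\<Sum>i<Suc n. x ^ i) = (1 - x) * (\<Sum>i<n. x ^ i) + (1 - x) * x ^ n"
    by (simp add: distrib_left)
  also have "\<dots> = (1 - x ^ n) + (x ^ n - x ^ Suc n)"
    by (subst Suc.IH) (simp add: left_diff_distrib)
  finally show ?case
    by simp
qed simp

lemma geometric_sum_mult_one_minus: "(\<Sum>i<n. (x::'a::ring_1) ^ i) * (1 - x) = 1 - x ^ n"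
proof (induction n)
  case (Suc n)
  have "(\<Sum>i<Suc n. x ^ i) * (1 - x) = (\<Sum>i<n. x ^ i) * (1 - x) + x ^ n * (1 - x)"
    by (simp add: distrib_right)
  also have "\<dots> = (1 - x ^ n) + (x ^ n - x ^ Suc n)"
    by (subst Suc.IH) (simp add: right_diff_distrib power_Suc2 del: power_Suc)
  finally show ?case
    by simp
qed simp

lemma invertible_elem_one_minus_nilpotent: "(x::'a::ring_1) ^ n = 0 \<Longrightarrow> invertible_elem (1 - x)"
  using one_minus_mult_geometric_sum[of x n] geometric_sum_mult_one_minus[of x n]
  by (auto intro: invertible_elemI)

lemma inverse_elem_one_minus_mult_one_minus_power:
  assumes "invertible_elem (1 - (u::'a::ring_1))"
  shows "inverse_elem (1 - u) * (1 - u ^ n) = (\<Sum>m<n. u ^ m)"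
    and "(1 - u ^ n) * inverse_elem (1 - u) = (\<Sum>m<n. u ^ m)"
proof -
  have "inverse_elem (1 - u) * (1 - u ^ n) = (inverse_elem (1 - u) * (1 - u)) * (\<Sum>m<n. u ^ m)"
    by (simp only: one_minus_mult_geometric_sum[symmetric] mult.assoc)
  then show "inverse_elem (1 - u) * (1 - u ^ n) = (\<Sum>m<n. u ^ m)"
    by (simp add: assms left_inverse_elem)
  have "(1 - u ^ n) * inverse_elem (1 - u) = (\<Sum>m<n. u ^ m) * ((1 - u) * inverse_elem (1 - u))"
    by (simp only: geometric_sum_mult_one_minus[symmetric] mult.assoc)
  then show "(1 - u ^ n) * inverse_elem (1 - u) = (\<Sum>m<n. u ^ m)"
    by (simp add: assms right_inverse_elem)
qed

section \<open>Neumann series and the topology of the invertible elements\<close>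

lemma
  fixes h :: "'a::{real_normed_algebra_1,banach}"
  assumes "norm h < 1"
  shows invertible_elem_one_minus: "invertible_elem (1 - h)"
    and inverse_elem_one_minus: "inverse_elem (1 - h) = (\<Sum>n. h ^ n)"
proof -
  have summable: "summable (\<lambda>n. h ^ n)"
    by (rule complete_algebra_summable_geometric[OF assms])
  have tail: "(\<Sum>n. h ^ Suc n) = (\<Sum>n. h ^ n) - 1"
    using suminf_split_head[OF summable] by simp
  have "(1 - h) * (\<Sum>n. h ^ n) = 1"
    using suminf_mult[OF summable, of h] tail by (simp add: left_diff_distrib)
  moreover have "(\<Sum>n. h ^ n) * (1 - h) = 1"
    using suminf_mult2[OF summable, of h] tail
    by (simp add: right_diff_distrib power_Suc2 del: power_Suc)
  ultimately show "invertible_elem (1 - h)" "inverse_elem (1 - h) = (\<Sum>n. h ^ n)"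
    by (auto intro: invertible_elemI inverse_elem_unique)
qed

lemma norm_inverse_elem_one_minus_diff_le:
  fixes h :: "'a::{real_normed_algebra_1,banach}"
  assumes "norm h \<le> 1/2"
  shows "norm (inverse_elem (1 - h) - 1) \<le> 2 * norm h"
proof -
  have h: "norm h < 1"
    using assms by simp
  have "inverse_elem (1 - h) - 1 = (\<Sum>n. h ^ Suc n)"
    using suminf_split_head[OF complete_algebra_summable_geometric[OF h]]
    by (simp add: inverse_elem_one_minus[OF h])
  also have "norm \<dots> \<le> (\<Sum>n. norm h ^ Suc n)"
    using h by (intro norm_suminf_le norm_power_ineq) (simp add: summable_geometric)
  also have "\<dots> = norm h / (1 - norm h)"
    using suminf_mult[OF summable_geometric, of "norm h" "norm h"] suminf_geometric[of "norm h"] h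
    by simp
  also have "\<dots> \<le> 2 * norm h"
    using assms by (auto simp: field_simps intro!: mult_left_le)
  finally show ?thesis .
qed

lemma
  fixes x y :: "'a::{real_normed_algebra_1,banach}"
  assumes x: "invertible_elem x" and close: "norm (inverse_elem x) * norm (y - x) \<le> 1/2"
  shows invertible_elem_near: "invertible_elem y"
    and norm_inverse_elem_diff_le: "norm (inverse_elem y - inverse_elem x)
      \<le> 2 * norm (inverse_elem x) * (norm (inverse_elem x) * norm (y - x))"
proof -
  define z where "z = inverse_elem x"
  define h where "h = z * (x - y)"
  have norm_h: "norm h \<le> norm z * norm (y - x)"
    unfolding h_def by (metis norm_minus_commute norm_mult_ineq)
  then have h_half: "norm h \<le> 1/2"
    using close by (simp add: z_def)
  have y_eq: "y = x * (1 - h)"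
    by (simp add: h_def z_def right_diff_distrib x right_inverse_elem flip: mult.assoc)
  have h_inv: "invertible_elem (1 - h)"
    using h_half by (intro invertible_elem_one_minus) simp
  show "invertible_elem y"
    unfolding y_eq using x h_inv by (rule invertible_elem_mult)
  have "inverse_elem y - z = (inverse_elem (1 - h) - 1) * z"
    unfolding y_eq by (simp add: inverse_elem_mult x h_inv z_def left_diff_distrib)
  also have "norm \<dots> \<le> 2 * norm h * norm z"
    using h_half by (intro order.trans[OF norm_mult_ineq] mult_right_mono
        norm_inverse_elem_one_minus_diff_le) simp_all
  also have "\<dots> \<le> 2 * norm z * (norm z * norm (y - x))"
    using mult_right_mono[OF norm_h norm_ge_zero[of z]] by (simp add: algebra_simps)
  finally show "norm (inverse_elem y - inverse_elem x)
      \<le> 2 * norm (inverse_elem x) * (norm (inverse_elem x) * norm (y - x))"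
    unfolding z_def .
qed

lemma isCont_inverse_elem:
  fixes x :: "'a::{real_normed_algebra_1,banach}"
  assumes x: "invertible_elem x"
  shows "isCont inverse_elem x"
proof -
  let ?z = "inverse_elem x"
  have small: "((\<lambda>y. norm ?z * norm (y - x)) \<longlongrightarrow> 0) (at x)"
    by (auto intro!: tendsto_eq_intros)
  have "\<forall>\<^sub>F y in at x. norm ?z * norm (y - x) \<le> 1/2"
    using order_tendstoD(2)[OF small, of "1/2"] by (auto elim: eventually_mono)
  then have "\<forall>\<^sub>F y in at x. norm (inverse_elem y - ?z) \<le> 2 * norm ?z * (norm ?z * norm (y - x))"
    by eventually_elim (rule norm_inverse_elem_diff_le[OF x])
  moreover have "((\<lambda>y. 2 * norm ?z * (norm ?z * norm (y - x))) \<longlongrightarrow> 0) (at x)"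
    using tendsto_mult_right_zero[OF small] .
  ultimately have "((\<lambda>y. inverse_elem y - ?z) \<longlongrightarrow> 0) (at x)"
    by (rule Lim_null_comparison)
  then show ?thesis
    unfolding isCont_def by (simp add: LIM_zero_iff)
qed

lemma open_invertible_elem: "open {x::'a::{real_normed_algebra_1,banach}. invertible_elem x}"
  unfolding open_dist
proof (intro ballI exI conjI allI impI; clarsimp)
  fix x :: 'a and y
  let ?c = "norm (inverse_elem x) + 1"
  assume x: "invertible_elem x" and "dist y x < 1 / (2 * ?c)"
  then have "?c * norm (y - x) < 1/2"
    by (simp add: dist_norm field_simps add_pos_nonneg)
  moreover have "norm (inverse_elem x) * norm (y - x) \<le> ?c * norm (y - x)"
    by (simp add: mult_right_mono)
  ultimately show "invertible_elem y"
    by (intro invertible_elem_near[OF x]) linarith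
qed (simp add: add_nonneg_pos)

lemma invertible_elem_of_left_inverse_near_invertible:
  fixes x x' y :: "'a::{real_normed_algebra_1,banach}"
  assumes yx: "y * x = 1" and x': "invertible_elem x'" and close: "norm y * norm (x - x') < 1"
  shows "invertible_elem x"
proof -
  have "y * x' = 1 - y * (x - x')"
    using yx by (simp add: right_diff_distrib)
  moreover have "norm (y * (x - x')) < 1"
    by (rule le_less_trans[OF norm_mult_ineq close])
  ultimately have "invertible_elem (y * x')"
    by (simp add: invertible_elem_one_minus)
  then have "invertible_elem y"
    by (rule invertible_elem_mult_cancel_right[OF x'])
  then show ?thesis
    using invertible_elem_mult_cancel_left[of y x] yx by simp
qed

lemma invertible_elem_of_right_inverse_near_invertible:
  fixes x x' y :: "'a::{real_normed_algebra_1,banach}"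
  assumes xy: "x * y = 1" and x': "invertible_elem x'" and close: "norm y * norm (x - x') < 1"
  shows "invertible_elem x"
proof -
  have "x' * y = 1 - (x - x') * y"
    using xy by (simp add: left_diff_distrib)
  moreover have "norm ((x - x') * y) < 1"
    using le_less_trans[OF norm_mult_ineq close[unfolded mult.commute[of "norm y"]]] .
  ultimately have "invertible_elem (x' * y)"
    by (simp add: invertible_elem_one_minus)
  then have "invertible_elem y"
    by (rule invertible_elem_mult_cancel_left[OF x'])
  then show ?thesis
    using invertible_elem_mult_cancel_right[of y x] xy by simp
qed

lemma not_invertible_elem_interior:
  fixes x y :: "'a::{real_normed_algebra_1,banach}"
  assumes one_sided: "y * x = 1 \<or> x * y = 1" and x: "\<not> invertible_elem x"
  shows "x \<in> interior (- {x. invertible_elem x})"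
proof -
  have "\<not> invertible_elem x'" if close: "dist x' x < 1 / (norm y + 1)" for x'
  proof
    assume x': "invertible_elem x'"
    have "norm (x - x') * (norm y + 1) < 1"
      using close by (simp add: dist_norm norm_minus_commute pos_less_divide_eq add_nonneg_pos)
    moreover have "norm y * norm (x - x') \<le> norm (x - x') * (norm y + 1)"
      by (simp add: algebra_simps)
    ultimately have small: "norm y * norm (x - x') < 1"
      by linarith
    from one_sided have "invertible_elem x"
    proof
      assume "y * x = 1"
      then show ?thesis
        using x' small by (rule invertible_elem_of_left_inverse_near_invertible)
    next
      assume "x * y = 1"
      then show ?thesis
        using x' small by (rule invertible_elem_of_right_inverse_near_invertible)
    qed
    with x show False ..
  qed
  then have "ball x (1 / (norm y + 1)) \<subseteq> - {x. invertible_elem x}"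
    by (simp add: subset_iff dist_commute)
  moreover have "1 / (norm y + 1) > 0"
    by (simp add: add_nonneg_pos)
  ultimately show ?thesis
    unfolding mem_interior by (intro exI conjI)
qed

lemma invertible_elem_of_one_sided_continuous:
  fixes f :: "'b::real_normed_vector \<Rightarrow> 'a::{real_normed_algebra_1,banach}"
  assumes cont: "continuous_on UNIV f"
    and one_sided: "\<And>t. \<exists>y. y * f t = 1 \<or> f t * y = 1"
    and "invertible_elem (f t0)"
  shows "invertible_elem (f t)"
proof -
  let ?Inv = "{x::'a. invertible_elem x}"
  have "- (f -` ?Inv) \<subseteq> f -` interior (- ?Inv)"
  proof
    fix t assume "t \<in> - (f -` ?Inv)"
    then have not_inv: "\<not> invertible_elem (f t)"
      by simp
    obtain y where "y * f t = 1 \<or> f t * y = 1"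
      using one_sided by blast
    then have "f t \<in> interior (- ?Inv)"
      using not_inv by (rule not_invertible_elem_interior)
    then show "t \<in> f -` interior (- ?Inv)"
      by simp
  qed
  then have "- (f -` ?Inv) = f -` interior (- ?Inv)"
    using interior_subset[of "- ?Inv"] by auto
  then have "closed (f -` ?Inv)"
    unfolding closed_def using open_vimage[OF open_interior cont] by simp
  moreover have "open (f -` ?Inv)"
    by (rule open_vimage[OF open_invertible_elem cont])
  moreover have "t0 \<in> f -` ?Inv"
    using \<open>invertible_elem (f t0)\<close> by simp
  ultimately have "f -` ?Inv = UNIV"
    using clopen[of "f -` ?Inv"] by auto
  then show ?thesis
    by (metis UNIV_I mem_Collect_eq vimageE)
qed

section \<open>The spectrum is not empty\<close>

lemma invertible_elem_scaleC_one: "c \<noteq> 0 \<Longrightarrow> invertible_elem (c *\<^sub>C (1::'a::complex_banach_algebra_1))"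
  by (rule invertible_elemI[of _ "(1 / c) *\<^sub>C 1"]) (simp_all add: mult_scaleC_left)

lemma one_minus_scaleC_eq:
  fixes x :: "'a::complex_banach_algebra_1"
  assumes "\<mu> \<noteq> 0"
  shows "1 - \<mu> *\<^sub>C x = (\<mu> *\<^sub>C 1) * ((1 / \<mu>) *\<^sub>C 1 - x)"
  using assms by (simp add: right_diff_distrib mult_scaleC_left)

lemma invertible_elem_one_minus_scaleC_iff:
  fixes x :: "'a::complex_banach_algebra_1"
  assumes "\<mu> \<noteq> 0"
  shows "invertible_elem (1 - \<mu> *\<^sub>C x) \<longleftrightarrow> 1 / \<mu> \<notin> spectrum x"
  unfolding spectrum_def one_minus_scaleC_eq[OF assms]
  using invertible_elem_scaleC_one[OF assms, where 'a = 'a]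
  by (auto intro: invertible_elem_mult invertible_elem_mult_cancel_left)

definition root_of_unity :: "nat \<Rightarrow> complex" where
  "root_of_unity n = exp (2 * of_real pi * \<i> / of_nat n)"

lemma root_of_unity_power: "root_of_unity n ^ m = exp (2 * of_real pi * \<i> * of_nat m / of_nat n)"
  unfolding root_of_unity_def exp_of_nat_mult[symmetric] by (simp add: field_simps)

lemma root_of_unity_power_eq_1_iff: "n \<ge> 1 \<Longrightarrow> root_of_unity n ^ m = 1 \<longleftrightarrow> n dvd m"
  unfolding root_of_unity_power by (rule complex_root_unity_eq_1)

lemma norm_root_of_unity [simp]: "cmod (root_of_unity n) = 1"
  unfolding root_of_unity_def by (simp add: norm_exp_eq_Re)

lemma sum_root_of_unity_powers:
  assumes n: "n \<ge> 1"
  shows "(\<Sum>k<n. (root_of_unity n ^ k) ^ m) = (if n dvd m then of_nat n else 0)"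
proof -
  let ?w = "root_of_unity n ^ m"
  have sum_eq: "(\<Sum>k<n. (root_of_unity n ^ k) ^ m) = (\<Sum>k<n. ?w ^ k)"
    by (intro sum.cong refl) (metis power_mult mult.commute)
  show ?thesis
  proof (cases "n dvd m")
    case True
    then have "?w = 1"
      using root_of_unity_power_eq_1_iff[OF n] by simp
    then show ?thesis
      unfolding sum_eq using True by simp
  next
    case False
    then have "?w \<noteq> 1"
      using root_of_unity_power_eq_1_iff[OF n] by simp
    moreover have "?w ^ n = 1"
      using root_of_unity_power_eq_1_iff[OF n, of "m * n"] by (simp add: power_mult)
    ultimately show ?thesis
      unfolding sum_eq using False by (simp add: geometric_sum)
  qed
qed

lemma sum_powers_scaleC_roots_of_unity:
  fixes x :: "'a::complex_banach_algebra_1"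
  assumes n: "n \<ge> 1"
  shows "(\<Sum>k<n. \<Sum>m<n. ((root_of_unity n ^ k * \<mu>) *\<^sub>C x) ^ m) = of_nat n"
proof -
  have "(\<Sum>k<n. \<Sum>m<n. ((root_of_unity n ^ k * \<mu>) *\<^sub>C x) ^ m)
      = (\<Sum>m<n. ((\<Sum>k<n. (root_of_unity n ^ k) ^ m) * \<mu> ^ m) *\<^sub>C x ^ m)"
    by (subst sum.swap)
       (simp add: scaleC_power power_mult_distrib sum_distrib_right scaleC.scale_sum_left)
  also have "\<dots> = (\<Sum>m<n. if m = 0 then of_nat n else 0)"
  proof (rule sum.cong[OF refl])
    fix m assume "m \<in> {..<n}"
    then have "n dvd m \<longleftrightarrow> m = 0"
      by (auto dest: dvd_imp_le)
    then show "((\<Sum>k<n. (root_of_unity n ^ k) ^ m) * \<mu> ^ m) *\<^sub>C x ^ m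
        = (if m = 0 then of_nat n else 0)"
      using n by (simp add: sum_root_of_unity_powers scaleC_of_nat)
  qed
  also have "\<dots> = of_nat n"
    using n by simp
  finally show ?thesis .
qed

lemma
  fixes x :: "'a::complex_banach_algebra_1"
  assumes inv: "\<And>\<mu>. invertible_elem (1 - \<mu> *\<^sub>C x)" and n: "n \<ge> 1"
  shows invertible_elem_one_minus_power: "invertible_elem (1 - \<mu> ^ n *\<^sub>C x ^ n)"
    and inverse_elem_one_minus_power_eq_average:
      "inverse_elem (1 - \<mu> ^ n *\<^sub>C x ^ n)
        = (1 / of_nat n) *\<^sub>C (\<Sum>k<n. inverse_elem (1 - (root_of_unity n ^ k * \<mu>) *\<^sub>C x))"
proof -
  let ?u = "\<lambda>k. (root_of_unity n ^ k * \<mu>) *\<^sub>C x"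
  let ?S = "\<Sum>k<n. inverse_elem (1 - ?u k)"
  let ?y = "1 - \<mu> ^ n *\<^sub>C x ^ n"
  have u_power: "?u k ^ n = \<mu> ^ n *\<^sub>C x ^ n" for k
    using root_of_unity_power_eq_1_iff[OF n, of "k * n"]
    by (simp add: scaleC_power power_mult_distrib power_mult)
  have "inverse_elem (1 - ?u k) * ?y = (\<Sum>m<n. ?u k ^ m)" for k
    using inverse_elem_one_minus_mult_one_minus_power(1)[OF inv, of "root_of_unity n ^ k * \<mu>" n]
    by (simp only: u_power)
  then have S_left: "?S * ?y = of_nat n"
    by (simp add: sum_distrib_right sum_powers_scaleC_roots_of_unity[OF n] del: scaleC_power)
  have "?y * inverse_elem (1 - ?u k) = (\<Sum>m<n. ?u k ^ m)" for k
    using inverse_elem_one_minus_mult_one_minus_power(2)[OF inv, of "root_of_unity n ^ k * \<mu>" n]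
    by (simp only: u_power)
  then have S_right: "?y * ?S = of_nat n"
    by (simp add: sum_distrib_left sum_powers_scaleC_roots_of_unity[OF n] del: scaleC_power)
  have "(of_nat n :: 'a) = of_nat n *\<^sub>C 1"
    by (simp add: scaleC_of_nat)
  then have "(1 / of_nat n) *\<^sub>C (of_nat n :: 'a) = 1"
    using n by (simp add: scaleC_scaleC)
  then have "((1 / of_nat n) *\<^sub>C ?S) * ?y = 1" "?y * ((1 / of_nat n) *\<^sub>C ?S) = 1"
    by (simp_all add: mult_scaleC_left mult_scaleC_right S_left S_right)
  then show "invertible_elem ?y" "inverse_elem ?y = (1 / of_nat n) *\<^sub>C ?S"
    by (auto intro: invertible_elemI inverse_elem_unique)
qed

lemma norm_scaleC_average_le:
  fixes f :: "nat \<Rightarrow> 'a::complex_banach_algebra_1"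
  assumes n: "n \<ge> 1" and bound: "\<And>k. k < n \<Longrightarrow> norm (f k) \<le> c"
  shows "norm ((1 / of_nat n) *\<^sub>C (\<Sum>k<n. f k)) \<le> c"
proof -
  have "norm ((1 / of_nat n) *\<^sub>C (\<Sum>k<n. f k)) = 1 / real n * norm (\<Sum>k<n. f k)"
    by (simp add: norm_scaleC norm_divide)
  also have "\<dots> \<le> 1 / real n * (\<Sum>k<n. c)"
    using bound by (intro mult_left_mono order.trans[OF norm_sum sum_mono]) auto
  also have "\<dots> = c"
    using n by simp
  finally show ?thesis .
qed

lemma norm_inverse_elem_one_minus_power_diff_le:
  fixes x :: "'a::complex_banach_algebra_1"
  assumes inv: "\<And>\<mu>. invertible_elem (1 - \<mu> *\<^sub>C x)"
    and close: "\<And>\<mu> \<mu>'. cmod \<mu> \<le> r \<Longrightarrow> cmod \<mu>' \<le> r \<Longrightarrow> dist \<mu>' \<mu> < \<delta> \<Longrightarrow>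
      norm (inverse_elem (1 - \<mu>' *\<^sub>C x) - inverse_elem (1 - \<mu> *\<^sub>C x)) \<le> \<epsilon>"
    and n: "n \<ge> 1" and \<mu>: "cmod \<mu> \<le> r" "cmod \<mu>' \<le> r" "dist \<mu>' \<mu> < \<delta>"
  shows "norm (inverse_elem (1 - \<mu>' ^ n *\<^sub>C x ^ n) - inverse_elem (1 - \<mu> ^ n *\<^sub>C x ^ n)) \<le> \<epsilon>"
proof -
  let ?R = "\<lambda>t k. inverse_elem (1 - (root_of_unity n ^ k * t) *\<^sub>C x)"
  have "inverse_elem (1 - \<mu>' ^ n *\<^sub>C x ^ n) - inverse_elem (1 - \<mu> ^ n *\<^sub>C x ^ n)
      = (1 / of_nat n) *\<^sub>C (\<Sum>k<n. ?R \<mu>' k - ?R \<mu> k)"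
    by (simp add: inverse_elem_one_minus_power_eq_average[OF inv n] sum_subtractf
        scaleC.scale_right_diff_distrib)
  also have "norm \<dots> \<le> \<epsilon>"
  proof (rule norm_scaleC_average_le[OF n])
    fix k
    have "dist (root_of_unity n ^ k * \<mu>') (root_of_unity n ^ k * \<mu>) = dist \<mu>' \<mu>"
      by (simp add: dist_norm norm_mult norm_power flip: right_diff_distrib)
    then show "norm (?R \<mu>' k - ?R \<mu> k) \<le> \<epsilon>"
      using \<mu> by (intro close) (simp_all add: norm_mult norm_power)
  qed
  finally show ?thesis .
qed

lemma continuous_on_inverse_elem_one_minus_scaleC:
  fixes x :: "'a::complex_banach_algebra_1"
  assumes "\<And>\<mu>. invertible_elem (1 - \<mu> *\<^sub>C x)"
  shows "continuous_on UNIV (\<lambda>\<mu>. inverse_elem (1 - \<mu> *\<^sub>C x))"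
proof -
  have "isCont (\<lambda>\<mu>. inverse_elem (1 - \<mu> *\<^sub>C x)) \<mu>" for \<mu>
    using assms by (intro isCont_o2[OF _ isCont_inverse_elem] continuous_intros)
  then show ?thesis
    by (simp add: continuous_at_imp_continuous_on)
qed

lemma inverse_elem_one_minus_scaleC_uniformly_close:
  fixes x :: "'a::complex_banach_algebra_1"
  assumes inv: "\<And>\<mu>. invertible_elem (1 - \<mu> *\<^sub>C x)"
  obtains \<delta> where "0 < \<delta>" "\<delta> \<le> 1"
    and "\<And>\<mu> \<mu>'. cmod \<mu> \<le> 2 \<Longrightarrow> cmod \<mu>' \<le> 2 \<Longrightarrow> dist \<mu>' \<mu> < \<delta> \<Longrightarrow>
      norm (inverse_elem (1 - \<mu>' *\<^sub>C x) - inverse_elem (1 - \<mu> *\<^sub>C x)) \<le> 1/4"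
proof -
  let ?R = "\<lambda>\<mu>. inverse_elem (1 - \<mu> *\<^sub>C x)"
  have "uniformly_continuous_on (cball 0 2) ?R"
    using continuous_on_subset[OF continuous_on_inverse_elem_one_minus_scaleC[OF inv]]
    by (intro compact_uniformly_continuous) auto
  then obtain \<delta> where "\<delta> > 0" and \<delta>: "\<And>\<mu> \<mu>'. \<mu> \<in> cball 0 2 \<Longrightarrow> \<mu>' \<in> cball 0 2 \<Longrightarrow>
      dist \<mu>' \<mu> < \<delta> \<Longrightarrow> dist (?R \<mu>') (?R \<mu>) < 1/4"
    unfolding uniformly_continuous_on_def by (metis zero_less_divide_1_iff zero_less_numeral)
  show ?thesis
  proof (rule that[of "min \<delta> 1"])
    show "0 < min \<delta> 1" "min \<delta> 1 \<le> 1"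
      using \<open>\<delta> > 0\<close> by simp_all
    show "norm (?R \<mu>' - ?R \<mu>) \<le> 1/4"
      if "cmod \<mu> \<le> 2" "cmod \<mu>' \<le> 2" "dist \<mu>' \<mu> < min \<delta> 1" for \<mu> \<mu>'
      using \<delta>[of \<mu> \<mu>'] that by (simp add: dist_norm)
  qed
qed

lemma tendsto_power_mult_zero_if_eventually_le_one:
  fixes s :: "nat \<Rightarrow> real"
  assumes nonneg: "\<And>n. s n \<ge> 0" and bounded: "\<forall>\<^sub>F n in sequentially. r ^ n * s n \<le> 1"
    and "0 \<le> q" "q < r"
  shows "(\<lambda>n. q ^ n * s n) \<longlonglongrightarrow> 0"
proof (rule Lim_null_comparison)
  have r: "r > 0"
    using assms by linarith
  show "\<forall>\<^sub>F n in sequentially. norm (q ^ n * s n) \<le> (q / r) ^ n"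
    using bounded
  proof eventually_elim
    case (elim n)
    have "norm (q ^ n * s n) = (q / r) ^ n * (r ^ n * s n)"
      using r \<open>0 \<le> q\<close> nonneg[of n] by (simp add: power_divide)
    also have "\<dots> \<le> (q / r) ^ n"
      using elim \<open>0 \<le> q\<close> r by (intro mult_left_le) simp_all
    finally show ?case .
  qed
  show "(\<lambda>n. (q / r) ^ n) \<longlonglongrightarrow> 0"
    using assms r by (intro LIMSEQ_power_zero) simp
qed

lemma eventually_power_norm_le_one:
  fixes x :: "'a::complex_banach_algebra_1"
  assumes inv: "\<And>\<mu>. invertible_elem (1 - \<mu> *\<^sub>C x)"
    and close: "\<And>\<mu> \<mu>'. cmod \<mu> \<le> 2 \<Longrightarrow> cmod \<mu>' \<le> 2 \<Longrightarrow> dist \<mu>' \<mu> < \<delta> \<Longrightarrow>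
      norm (inverse_elem (1 - \<mu>' *\<^sub>C x) - inverse_elem (1 - \<mu> *\<^sub>C x)) \<le> 1/4"
    and \<rho>: "0 \<le> \<rho>" "\<rho> \<le> 2" and \<rho>': "0 \<le> \<rho>'" "\<rho>' \<le> 2" "\<bar>\<rho>' - \<rho>\<bar> < \<delta>"
    and decay: "(\<lambda>n. \<rho> ^ n * norm (x ^ n)) \<longlonglongrightarrow> 0"
  shows "\<forall>\<^sub>F n in sequentially. \<rho>' ^ n * norm (x ^ n) \<le> 1"
proof -
  have "\<forall>\<^sub>F n in sequentially. \<rho> ^ n * norm (x ^ n) < 1/8"
    using order_tendstoD(2)[OF decay, of "1/8"] by simp
  then show ?thesis
    using eventually_ge_at_top[of 1]
  proof eventually_elim
    case (elim n)
    let ?h = "of_real \<rho> ^ n *\<^sub>C x ^ n" and ?h' = "of_real \<rho>' ^ n *\<^sub>C x ^ n"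
    have "norm ?h \<le> 1/2"
      using elim \<rho> by (simp add: norm_scaleC norm_power)
    then have "norm (inverse_elem (1 - ?h) - 1) \<le> 1/4"
      using norm_inverse_elem_one_minus_diff_le[of ?h] elim \<rho>
      by (simp add: norm_scaleC norm_power)
    moreover have "norm (inverse_elem (1 - ?h') - inverse_elem (1 - ?h)) \<le> 1/4"
      using \<rho> \<rho>' by (intro norm_inverse_elem_one_minus_power_diff_le[OF inv close elim(2)])
        (simp_all add: dist_norm flip: of_real_diff)
    ultimately have small: "norm (1 - inverse_elem (1 - ?h')) \<le> 1/2"
      using norm_triangle_ineq[of "inverse_elem (1 - ?h) - inverse_elem (1 - ?h')"
          "1 - inverse_elem (1 - ?h)"]
      by (simp add: norm_minus_commute)
    have "inverse_elem (inverse_elem (1 - ?h')) = 1 - ?h'"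
      by (rule inverse_elem_inverse_elem[OF invertible_elem_one_minus_power[OF inv elim(2)]])
    then have "inverse_elem (1 - (1 - inverse_elem (1 - ?h'))) = 1 - ?h'"
      by simp
    then have "norm ((1 - ?h') - 1) \<le> 1"
      using norm_inverse_elem_one_minus_diff_le[OF small] small by simp
    then show ?case
      using \<rho>' by (simp add: norm_scaleC norm_power)
  qed
qed

text \<open>Rickart's argument: uniform continuity of the resolvent on the disc of radius 2 lets the
  radius \<open>\<rho>\<close> with \<open>\<rho> ^ n * norm (x ^ n) \<longlonglongrightarrow> 0\<close> grow by the fixed step \<open>\<delta> / 2\<close> until it reaches 1.\<close>

lemma tendsto_norm_power_zero:
  fixes x :: "'a::complex_banach_algebra_1"
  assumes inv: "\<And>\<mu>. invertible_elem (1 - \<mu> *\<^sub>C x)"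
  shows "(\<lambda>n. norm (x ^ n)) \<longlonglongrightarrow> 0"
proof -
  obtain \<delta> where \<delta>: "0 < \<delta>" "\<delta> \<le> 1" and close: "\<And>\<mu> \<mu>'. cmod \<mu> \<le> 2 \<Longrightarrow> cmod \<mu>' \<le> 2 \<Longrightarrow>
      dist \<mu>' \<mu> < \<delta> \<Longrightarrow> norm (inverse_elem (1 - \<mu>' *\<^sub>C x) - inverse_elem (1 - \<mu> *\<^sub>C x)) \<le> 1/4"
    using inverse_elem_one_minus_scaleC_uniformly_close[OF inv] by blast
  define decays where "decays \<rho> \<longleftrightarrow> (\<lambda>n. \<rho> ^ n * norm (x ^ n)) \<longlonglongrightarrow> 0" for \<rho>
  have step: "decays (min 1 (\<rho> + \<delta> / 2))" if "0 \<le> \<rho>" "\<rho> \<le> 1" "decays \<rho>" for \<rho>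
  proof -
    have "\<forall>\<^sub>F n in sequentially. (\<rho> + 3 * \<delta> / 4) ^ n * norm (x ^ n) \<le> 1"
      using that \<delta> by (intro eventually_power_norm_le_one[OF inv close]) (auto simp: decays_def)
    then show ?thesis
      unfolding decays_def using that \<delta>
      by (intro tendsto_power_mult_zero_if_eventually_le_one[where r = "\<rho> + 3 * \<delta> / 4"]) auto
  qed
  have decays_m: "decays (min 1 (of_nat m * \<delta> / 2))" for m
  proof (induction m)
    case 0
    show ?case
      unfolding decays_def by (rule LIMSEQ_imp_Suc) simp
  next
    case (Suc m)
    have "min 1 (of_nat (Suc m) * \<delta> / 2) = min 1 (min 1 (of_nat m * \<delta> / 2) + \<delta> / 2)"
      using \<delta> by (cases "of_nat m * \<delta> / 2 \<le> 1") (simp_all add: distrib_right add_divide_distrib)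
    then show ?case
      using step[OF _ _ Suc.IH] \<delta> by simp
  qed
  obtain m :: nat where "2 / \<delta> \<le> of_nat m"
    using real_arch_simple by blast
  then have "min 1 (of_nat m * \<delta> / 2) = 1"
    using \<delta> by (simp add: divide_le_eq mult.commute)
  then show ?thesis
    using decays_m[of m] by (simp add: decays_def)
qed

theorem spectrum_nonempty: "spectrum (x::'a::complex_banach_algebra_1) \<noteq> {}"
proof
  assume empty: "spectrum x = {}"
  then have "invertible_elem ((0::complex) *\<^sub>C 1 - x)"
    unfolding spectrum_def by blast
  then have x: "invertible_elem x"
    by simp
  define y where "y = inverse_elem x"
  have "invertible_elem (1 - \<mu> *\<^sub>C x)" for \<mu>
    using empty by (cases "\<mu> = 0") (simp_all add: invertible_elem_one_minus_scaleC_iff)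
  then have x_decay: "(\<lambda>n. norm (x ^ n)) \<longlonglongrightarrow> 0"
    by (rule tendsto_norm_power_zero)
  have "invertible_elem (1 - \<mu> *\<^sub>C y)" for \<mu>
  proof -
    have eq: "1 - \<mu> *\<^sub>C y = (x - \<mu> *\<^sub>C 1) * y"
      by (simp add: algebra_simps mult_scaleC_left y_def x right_inverse_elem)
    have "invertible_elem (- (\<mu> *\<^sub>C 1 - x))"
      using empty unfolding spectrum_def invertible_elem_minus_iff by blast
    then have "invertible_elem ((x - \<mu> *\<^sub>C 1) * y)"
      using invertible_elem_inverse_elem[OF x] unfolding y_def
      by (intro invertible_elem_mult) simp_all
    then show ?thesis
      unfolding eq .
  qed
  then have y_decay: "(\<lambda>n. norm (y ^ n)) \<longlonglongrightarrow> 0"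
    by (rule tendsto_norm_power_zero)
  have "\<forall>\<^sub>F n in sequentially. norm (x ^ n) * norm (y ^ n) < 1"
    using order_tendstoD(2)[OF tendsto_mult[OF x_decay y_decay], of 1] by simp
  then obtain N where "\<And>n. n \<ge> N \<Longrightarrow> norm (x ^ n) * norm (y ^ n) < 1"
    unfolding eventually_sequentially by blast
  then have small: "norm (x ^ N) * norm (y ^ N) < 1"
    by simp
  have "x ^ N * y ^ N = 1"
    by (rule power_mult_power_eq_one) (simp add: y_def x right_inverse_elem)
  then have "1 \<le> norm (x ^ N) * norm (y ^ N)"
    using norm_mult_ineq[of "x ^ N" "y ^ N"] by simp
  with small show False
    by simp
qed

lemma quasinilpotent_iff_one_minus_scaleC_invertible:
  "quasinilpotent (x::'a::complex_banach_algebra_1) \<longleftrightarrow> (\<forall>\<mu>. invertible_elem (1 - \<mu> *\<^sub>C x))"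
proof
  assume "quasinilpotent x"
  then have spectrum_x: "spectrum x = {0}"
    by (simp add: quasinilpotent_def)
  show "\<forall>\<mu>. invertible_elem (1 - \<mu> *\<^sub>C x)"
  proof
    fix \<mu> :: complex
    show "invertible_elem (1 - \<mu> *\<^sub>C x)"
      using spectrum_x by (cases "\<mu> = 0") (simp_all add: invertible_elem_one_minus_scaleC_iff)
  qed
next
  assume inv: "\<forall>\<mu>. invertible_elem (1 - \<mu> *\<^sub>C x)"
  have "spectrum x \<subseteq> {0}"
  proof
    fix z assume z: "z \<in> spectrum x"
    show "z \<in> {0}"
    proof (rule ccontr)
      assume "z \<notin> {0}"
      then have "invertible_elem (1 - (1 / z) *\<^sub>C x) \<longleftrightarrow> z \<notin> spectrum x"
        using invertible_elem_one_minus_scaleC_iff[of "1 / z" x] by simp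
      then show False
        using inv z by blast
    qed
  qed
  then show "quasinilpotent x"
    using spectrum_nonempty[of x] unfolding quasinilpotent_def by blast
qed

section \<open>Words in \<open>a\<close> and \<open>b\<close>\<close>

locale ab_words_vanish =
  fixes a b :: "'a::ring_1" and k :: nat
  assumes ab_word_eq_0: "\<And>ws. set ws \<subseteq> {a, b} \<Longrightarrow> k \<le> length ws \<Longrightarrow> a * b * prod_list ws = 0"
begin

text \<open>An element of \<open>absorbing j\<close> behaves like a word of length \<open>j\<close> in \<open>a\<close> and \<open>b\<close>:
  preceded by \<open>a * b\<close> and any word of length at least \<open>k - j\<close>, it gives 0.\<close>

definition absorbing :: "nat \<Rightarrow> 'a set" where
  "absorbing j = {y. \<forall>ws. set ws \<subseteq> {a, b} \<longrightarrow> k \<le> length ws + j \<longrightarrow> a * b * prod_list ws * y = 0}"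

lemma absorbing_0 [simp]: "y \<in> absorbing 0"
  by (simp add: absorbing_def ab_word_eq_0)

lemma absorbing_antimono: "i \<le> j \<Longrightarrow> y \<in> absorbing j \<Longrightarrow> y \<in> absorbing i"
  unfolding absorbing_def by fastforce

lemma absorbing_from_k: "y \<in> absorbing k \<Longrightarrow> y \<in> absorbing j"
  unfolding absorbing_def by simp

lemma ab_mult_absorbing_k: "y \<in> absorbing k \<Longrightarrow> a * b * y = 0"
  unfolding absorbing_def by (drule CollectD, drule spec[of _ "[]"]) simp

lemma absorbing_zero [simp]: "0 \<in> absorbing j"
  by (simp add: absorbing_def)

lemma absorbing_add: "y \<in> absorbing j \<Longrightarrow> z \<in> absorbing j \<Longrightarrow> y + z \<in> absorbing j"
  by (simp add: absorbing_def distrib_left)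

lemma absorbing_sum: "(\<And>i. i \<in> I \<Longrightarrow> f i \<in> absorbing j) \<Longrightarrow> sum f I \<in> absorbing j"
  by (induction I rule: infinite_finite_induct) (simp_all add: absorbing_add)

lemma absorbing_mult_right: "y \<in> absorbing j \<Longrightarrow> y * z \<in> absorbing j"
  by (simp add: absorbing_def flip: mult.assoc)

lemma letter_mult_absorbing:
  assumes "x \<in> {a, b}" and y: "y \<in> absorbing j"
  shows "x * y \<in> absorbing (Suc j)"
  unfolding absorbing_def
proof (intro CollectI allI impI)
  fix ws assume "set ws \<subseteq> {a, b}" "k \<le> length ws + Suc j"
  then have "set (ws @ [x]) \<subseteq> {a, b}" "k \<le> length (ws @ [x]) + j"
    using assms by auto
  then have "a * b * prod_list (ws @ [x]) * y = 0"
    using y unfolding absorbing_def by blast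
  then show "a * b * prod_list ws * (x * y) = 0"
    by (simp add: mult.assoc)
qed

lemmas a_mult_absorbing = letter_mult_absorbing[OF insertI1]
  and b_mult_absorbing = letter_mult_absorbing[OF insertI2[OF singletonI]]

lemma add_mult_absorbing: "y \<in> absorbing j \<Longrightarrow> (a + b) * y \<in> absorbing (Suc j)"
  unfolding distrib_right by (intro absorbing_add a_mult_absorbing b_mult_absorbing)

lemma inverse_elem_one_minus_mult_absorbing:
  assumes raise: "\<And>j y. y \<in> absorbing j \<Longrightarrow> x * y \<in> absorbing (Suc j)"
    and inv: "invertible_elem (1 - x)" and y: "y \<in> absorbing j"
  shows "inverse_elem (1 - x) * y \<in> absorbing j"
proof -
  let ?P = "inverse_elem (1 - x)"
  have raise_power: "x ^ i * z \<in> absorbing (j + i)" if "z \<in> absorbing j" for i j z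
    using that by (induction i) (simp_all add: mult.assoc raise)
  have "(\<Sum>i<k. x ^ i) = (\<Sum>i<k. x ^ i) * ((1 - x) * ?P)"
    by (simp add: inv right_inverse_elem)
  also have "\<dots> = ?P - x ^ k * ?P"
    by (simp only: mult.assoc[symmetric] geometric_sum_mult_one_minus) (simp add: left_diff_distrib)
  finally have P_eq: "(\<Sum>i<k. x ^ i) + x ^ k * ?P = ?P"
    by simp
  have "?P * y = ((\<Sum>i<k. x ^ i) + x ^ k * ?P) * y"
    by (simp only: P_eq)
  also have "\<dots> = (\<Sum>i<k. x ^ i * y) + x ^ k * (?P * y)"
    by (simp add: distrib_right sum_distrib_right mult.assoc)
  finally have P_y: "?P * y = (\<Sum>i<k. x ^ i * y) + x ^ k * (?P * y)" .
  have "(\<Sum>i<k. x ^ i * y) \<in> absorbing j"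
    by (intro absorbing_sum absorbing_antimono[OF le_add1 raise_power[OF y]])
  moreover have "x ^ k * (?P * y) \<in> absorbing j"
    using raise_power[OF absorbing_0, of k] by (auto intro: absorbing_from_k)
  ultimately show ?thesis
    by (subst P_y) (rule absorbing_add)
qed

lemma ab_sandwich_nilpotent:
  assumes U: "\<And>j y. y \<in> absorbing j \<Longrightarrow> U * y \<in> absorbing j"
    and V: "\<And>j y. y \<in> absorbing j \<Longrightarrow> V * y \<in> absorbing j"
  shows "(U * a * b * V) ^ Suc k = 0"
proof -
  define T where "T = V * U * a * b"
  have T_power: "T ^ m \<in> absorbing (2 * m)" for m
  proof (induction m)
    case (Suc m)
    have "T ^ Suc m = V * (U * (a * (b * T ^ m)))"
      by (simp add: T_def mult.assoc)
    moreover have "V * (U * (a * (b * T ^ m))) \<in> absorbing (Suc (Suc (2 * m)))"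
      using Suc by (intro V U a_mult_absorbing b_mult_absorbing)
    ultimately show ?case
      by simp
  qed simp
  have "(U * a * b * V) ^ Suc m = U * a * b * T ^ m * V" for m
    by (induction m) (simp_all add: T_def mult.assoc)
  moreover have "a * b * (T ^ k * V) = 0"
    using T_power[of k] by (intro ab_mult_absorbing_k absorbing_mult_right absorbing_antimono[of k "2 * k"]) simp_all
  ultimately show ?thesis
    by (simp add: mult.assoc)
qed

lemma invertible_elem_one_minus_add:
  assumes inv_a: "invertible_elem (1 - a)" and inv_b: "invertible_elem (1 - b)"
  shows "invertible_elem (1 - (a + b))"
proof -
  let ?A = "1 - a" and ?B = "1 - b"
  define n where "n = inverse_elem ?A * a * b * inverse_elem ?B"
  have "n ^ Suc k = 0"
    unfolding n_def
  proof (rule ab_sandwich_nilpotent)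
    show "inverse_elem ?A * y \<in> absorbing j" if "y \<in> absorbing j" for j y
      by (rule inverse_elem_one_minus_mult_absorbing[OF a_mult_absorbing inv_a that])
    show "inverse_elem ?B * y \<in> absorbing j" if "y \<in> absorbing j" for j y
      by (rule inverse_elem_one_minus_mult_absorbing[OF b_mult_absorbing inv_b that])
  qed
  then have "invertible_elem (1 - n)"
    by (rule invertible_elem_one_minus_nilpotent)
  then have inv_product: "invertible_elem (?A * (1 - n) * ?B)"
    using inv_a inv_b by (intro invertible_elem_mult)
  have "?A * n * ?B = (?A * inverse_elem ?A) * (a * b) * (inverse_elem ?B * ?B)"
    unfolding n_def by (simp only: mult.assoc)
  then have sandwich: "?A * n * ?B = a * b"
    using inv_a inv_b by (simp add: right_inverse_elem left_inverse_elem)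
  have "?A * (1 - n) * ?B = ?A * ?B - ?A * n * ?B"
    by (simp add: right_diff_distrib left_diff_distrib)
  also have "\<dots> = 1 - (a + b)"
    unfolding sandwich by (simp add: algebra_simps)
  finally show ?thesis
    using inv_product by simp
qed

lemma invertible_elem_one_minus_mult_one_minus:
  assumes inv: "invertible_elem (1 - (a + b))"
  shows "invertible_elem ((1 - a) * (1 - b))"
proof -
  let ?C = "1 - (a + b)"
  define m where "m = inverse_elem ?C * a * b"
  have "(inverse_elem ?C * a * b * 1) ^ Suc k = 0"
  proof (rule ab_sandwich_nilpotent)
    show "inverse_elem ?C * y \<in> absorbing j" if "y \<in> absorbing j" for j y
      by (rule inverse_elem_one_minus_mult_absorbing[OF add_mult_absorbing inv that])
  qed simp
  then have "m ^ Suc k = 0"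
    by (simp add: m_def)
  then have "(- m) ^ Suc k = 0"
    by (simp only: power_minus[of m] mult_zero_right)
  then have "invertible_elem (1 - - m)"
    by (rule invertible_elem_one_minus_nilpotent)
  then have inv_product: "invertible_elem (?C * (1 + m))"
    using inv by (simp add: invertible_elem_mult)
  have "?C * m = (?C * inverse_elem ?C) * (a * b)"
    unfolding m_def by (simp only: mult.assoc)
  then have Cm: "?C * m = a * b"
    using inv by (simp add: right_inverse_elem)
  have "?C * (1 + m) = ?C + ?C * m"
    by (simp add: distrib_left)
  also have "\<dots> = (1 - a) * (1 - b)"
    unfolding Cm by (simp add: algebra_simps)
  finally show ?thesis
    using inv_product by simp
qed

end

lemma ab_words_vanish_scaleC:
  fixes a b :: "'a::complex_banach_algebra_1"
  assumes "ab_words_vanish a b k"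
  shows "ab_words_vanish (\<mu> *\<^sub>C a) (\<mu> *\<^sub>C b) k"
proof
  fix ws assume ws: "set ws \<subseteq> {\<mu> *\<^sub>C a, \<mu> *\<^sub>C b}" "k \<le> length ws"
  then have "ws \<in> lists ((\<lambda>v. \<mu> *\<^sub>C v) ` {a, b})"
    by auto
  then obtain vs where vs: "vs \<in> lists {a, b}" and ws_eq: "ws = map (\<lambda>v. \<mu> *\<^sub>C v) vs"
    unfolding lists_image by blast
  have "prod_list (map (\<lambda>v. \<mu> *\<^sub>C v) vs) = \<mu> ^ length vs *\<^sub>C prod_list vs" for vs :: "'a list"
    by (induction vs) (simp_all add: mult_scaleC_left mult_scaleC_right)
  moreover have "a * b * prod_list vs = 0"
    using vs ws ws_eq by (intro ab_words_vanish.ab_word_eq_0[OF assms]) auto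
  ultimately show "\<mu> *\<^sub>C a * \<mu> *\<^sub>C b * prod_list ws = 0"
    by (simp add: ws_eq mult_scaleC_left mult_scaleC_right)
qed

lemma ab_words_vanishI:
  fixes a b :: "'a::ring_1"
  assumes vanish: "\<forall>\<alpha>::nat \<Rightarrow> 'a. (\<forall>i\<in>{1..k}. \<alpha> i \<in> {a, b}) \<longrightarrow>
    a * b * (\<Prod>i\<leftarrow>[1..<k+1]. \<alpha> i) = 0"
  shows "ab_words_vanish a b k"
proof
  fix ws assume ws: "set ws \<subseteq> {a, b}" "k \<le> length ws"
  define \<alpha> where "\<alpha> i = ws ! (i - 1)" for i
  have map_eq: "map \<alpha> [1..<k+1] = take k ws"
    using ws by (intro nth_equalityI) (simp_all add: \<alpha>_def del: upt_Suc)
  have "\<alpha> i \<in> {a, b}" if "i \<in> {1..k}" for i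
  proof -
    have "i - 1 < length ws"
      using that ws by auto
    then have "\<alpha> i \<in> set ws"
      unfolding \<alpha>_def by (rule nth_mem)
    then show ?thesis
      using ws by blast
  qed
  then have "a * b * (\<Prod>i\<leftarrow>[1..<k+1]. \<alpha> i) = 0"
    using vanish by blast
  then have "a * b * prod_list (take k ws) = 0"
    unfolding map_eq .
  then have "a * b * prod_list (take k ws) * prod_list (drop k ws) = 0"
    by simp
  then show "a * b * prod_list ws = 0"
    by (metis append_take_drop_id mult.assoc prod_list.append)
qed

lemma invertible_elem_one_minus_scaleC_factors:
  fixes a b :: "'a::complex_banach_algebra_1"
  assumes product: "\<And>\<mu>. invertible_elem ((1 - \<mu> *\<^sub>C a) * (1 - \<mu> *\<^sub>C b))"
  shows "invertible_elem (1 - \<mu> *\<^sub>C a)" and "invertible_elem (1 - \<mu> *\<^sub>C b)"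
proof -
  have continuous: "continuous_on UNIV (\<lambda>\<mu>. 1 - \<mu> *\<^sub>C x)" for x :: 'a
    by (intro continuous_intros)
  show "invertible_elem (1 - \<mu> *\<^sub>C a)"
  proof (rule invertible_elem_of_one_sided_continuous[OF continuous])
    show "\<exists>y. y * (1 - t *\<^sub>C a) = 1 \<or> (1 - t *\<^sub>C a) * y = 1" for t
      using invertible_elem_mult_imp_one_sided(1)[OF product] by blast
    show "invertible_elem (1 - 0 *\<^sub>C a)"
      by simp
  qed
  show "invertible_elem (1 - \<mu> *\<^sub>C b)"
  proof (rule invertible_elem_of_one_sided_continuous[OF continuous])
    show "\<exists>y. y * (1 - t *\<^sub>C b) = 1 \<or> (1 - t *\<^sub>C b) * y = 1" for t
      using invertible_elem_mult_imp_one_sided(2)[OF product] by blast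
    show "invertible_elem (1 - 0 *\<^sub>C b)"
      by simp
  qed
qed

theorem lemma3p1:
  fixes a b :: "'a::complex_banach_algebra_1" and k :: nat
  assumes "k \<ge> 1"
    and "\<forall>\<alpha>::nat \<Rightarrow> 'a. (\<forall>i\<in>{1..k}. \<alpha> i \<in> {a, b}) \<longrightarrow>
           a * b * (\<Prod>i\<leftarrow>[1..<k+1]. \<alpha> i) = 0"
  shows "(quasinilpotent a \<and> quasinilpotent b) \<longleftrightarrow> quasinilpotent (a + b)"
proof -
  have vanish: "ab_words_vanish (\<mu> *\<^sub>C a) (\<mu> *\<^sub>C b) k" for \<mu>
    using ab_words_vanish_scaleC[OF ab_words_vanishI[OF assms(2)]] .
  have add: "invertible_elem (1 - \<mu> *\<^sub>C (a + b))"
    if "invertible_elem (1 - \<mu> *\<^sub>C a)" "invertible_elem (1 - \<mu> *\<^sub>C b)" for \<mu>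
    using ab_words_vanish.invertible_elem_one_minus_add[OF vanish that]
    by (simp add: scaleC_add_right)
  have factors: "invertible_elem (1 - \<mu> *\<^sub>C a)" "invertible_elem (1 - \<mu> *\<^sub>C b)"
    if "\<forall>\<mu>. invertible_elem (1 - \<mu> *\<^sub>C (a + b))" for \<mu>
  proof -
    have "invertible_elem ((1 - \<nu> *\<^sub>C a) * (1 - \<nu> *\<^sub>C b))" for \<nu>
      using ab_words_vanish.invertible_elem_one_minus_mult_one_minus[OF vanish] that
      by (simp add: scaleC_add_right)
    then show "invertible_elem (1 - \<mu> *\<^sub>C a)" "invertible_elem (1 - \<mu> *\<^sub>C b)"
      by (fact invertible_elem_one_minus_scaleC_factors)+
  qed
  show ?thesis
    unfolding quasinilpotent_iff_one_minus_scaleC_invertible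
    using add factors by blast
qed

end
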